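(* Let $\ell\ge2$ and let $T_\ell$ be the infinite homogeneous tree in which every vertex has $\ell$ neighbors; fix a root vertex $0$. Let $(U_e)$ be i.i.d. uniform random variables on $[0,1]$ indexed by the edges of $T_\ell$. For each vertex $x$, let $z(x)$ be the neighbor $y$ of $x$ maximizing $U_{\{x,y\}}$. Let $x_0=0$, $x_{j+1}=z(x_j)$, and $\tilde M=\min\{m\ge0:x_{m+2}=x_m\}$. Then, with $c=\frac1{\ell-1}$, for every integer $k\ge0$, $$\mathbb P(\tilde M=k)=\frac{c+k+1}{\prod_{j=2}^{k+2}(c+j)}.$$
   Context: This is the highly disordered random ferromagnet on the tree, in which each spin, when updated, copies the spin of the neighbor $z(x)$ joined to it by the strongest bond. $\tilde M$ is the number of steps from the root along the directed path $x\mapsto z(x)$ until reaching a bully bond, i.e. an edge $\{x_m,z(x_m)\}$ with $z(z(x_m))=x_m$. *)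

theory Defs
  imports "HOL-Probability.Probability"
begin

(* Vertices of the l-regular tree T_l: reduced paths from the root, encoded as
   lists with the most recent step at the head. *)

definition tree_vertex :: "nat \<Rightarrow> nat list \<Rightarrow> bool" where
  "tree_vertex l v \<longleftrightarrow> v = [] \<or> (last v < l \<and> (\<forall>i \<in> set (butlast v). i < l - 1))"

definition nbrs :: "nat \<Rightarrow> nat list \<Rightarrow> nat list set" where
  "nbrs l x = (if x = [] then {[i] | i. i < l} else {tl x} \<union> {i # x | i. i < l - 1})"

(* each edge {x,y} of the tree is identified with its endpoint farther from the root *)
definition edge_key :: "nat list \<Rightarrow> nat list \<Rightarrow> nat list" where
  "edge_key x y = (if length x < length y then y else x)"

definition zmap :: "nat \<Rightarrow> (nat list \<Rightarrow> real) \<Rightarrow> nat list \<Rightarrow> nat list" where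
  "zmap l U x = (SOME y. y \<in> nbrs l x \<and> (\<forall>y' \<in> nbrs l x. U (edge_key x y') \<le> U (edge_key x y)))"

definition zpath :: "nat \<Rightarrow> (nat list \<Rightarrow> real) \<Rightarrow> nat \<Rightarrow> nat list" where
  "zpath l U j = (zmap l U ^^ j) []"

definition has_bully :: "nat \<Rightarrow> (nat list \<Rightarrow> real) \<Rightarrow> bool" where
  "has_bully l U \<longleftrightarrow> (\<exists>m. zpath l U (m + 2) = zpath l U m)"

definition Mtilde :: "nat \<Rightarrow> (nat list \<Rightarrow> real) \<Rightarrow> nat" where
  "Mtilde l U = (LEAST m. zpath l U (m + 2) = zpath l U m)"

definition edge_weights :: "(nat list \<Rightarrow> real) measure" where
  "edge_weights = PiM UNIV (\<lambda>_. uniform_measure lborel {0..1::real})"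

end

theory Submission
  imports Defs
begin

text \<open>Almost surely all weights are distinct. The walk from the root then keeps moving away
  from the root as long as each new edge beats every other edge at its endpoint, so the event
  \<open>Mtilde = k\<close> with the walk at a given vertex \<open>v\<close> of depth \<open>k + 1\<close> after \<open>k + 1\<close> steps says
  that the edges along the path to \<open>v\<close> form a chain of records: the \<open>j\<close>-th edge is the largest
  of all edges incident to the first \<open>j\<close> path vertices, and the last one also beats the
  \<open>l - 1\<close> edges below \<open>v\<close>. For i.i.d. uniform weights such a chain of maxima over growing
  pools \<open>P\<^sub>1 \<subseteq> P\<^sub>2 \<subseteq> \<dots>\<close> has probability \<open>\<Prod> 1 / card P\<^sub>j\<close>; here the pools have sizes
  \<open>l + j (l - 1)\<close> for \<open>j < k\<close> and finally \<open>l + (k + 1) (l - 1)\<close>, and summing over the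
  \<open>l (l - 1) ^ k\<close> vertices \<open>v\<close> gives the formula.\<close>

section \<open>Uniform weights\<close>

abbreviation uniform01 :: "real measure" where
  "uniform01 \<equiv> uniform_measure lborel {0..1}"

lemma prob_space_uniform01: "prob_space uniform01"
  by (intro prob_space_uniform_measure) auto

interpretation U: product_prob_space "\<lambda>_::'i. uniform01" "UNIV :: 'i set"
  unfolding product_prob_space_def product_prob_space_axioms_def product_sigma_finite_def
  by (blast intro: prob_space_uniform01 prob_space_imp_sigma_finite)

lemma measurable_component_uniform01:
  "j \<in> J \<Longrightarrow> (\<lambda>x. x j) \<in> borel_measurable (PiM J (\<lambda>_. uniform01))"
  using measurable_component_singleton[of j J "\<lambda>_. uniform01"]
  by (simp add: measurable_cong_sets[OF refl, of _ uniform01 borel])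

lemma AE_uniform01: "AE t in uniform01. t \<in> {0..1}"
  by (rule AE_uniform_measureI) auto

lemma nn_integral_power_Icc:
  assumes "0 \<le> s"
  shows "(\<integral>\<^sup>+t. ennreal (t ^ m) * indicator {0..s} t \<partial>lborel) = ennreal (s ^ Suc m / Suc m)"
proof -
  have "(\<integral>\<^sup>+t. ennreal (t ^ m) * indicator {0..s} t \<partial>lborel) = ennreal (s ^ Suc m / Suc m - 0 ^ Suc m / Suc m)"
  proof (rule nn_integral_FTC_Icc[where F="\<lambda>t. t ^ Suc m / Suc m"])
    fix t :: real show "DERIV (\<lambda>t. t ^ Suc m / Suc m) t :> t ^ m"
      by (intro derivative_eq_intros) (auto simp: field_simps simp del: of_nat_Suc)
  qed (auto simp: assms)
  then show ?thesis by simp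
qed

lemma nn_integral_uniform01_power: "(\<integral>\<^sup>+t. ennreal (t ^ m) \<partial>uniform01) = ennreal (1 / Suc m)"
  using nn_integral_power_Icc[of 1 m]
  by (simp add: nn_integral_uniform_measure divide_ennreal_def)

lemma nn_integral_uniform01_power_below:
  assumes "s \<in> {0..1}"
  shows "(\<integral>\<^sup>+t. ennreal (t ^ m) * indicator {..<s} t \<partial>uniform01) = ennreal (s ^ Suc m / Suc m)"
proof -
  have "(\<integral>\<^sup>+t. ennreal (t ^ m) * indicator {..<s} t * indicator {0..1} t \<partial>lborel)
      = (\<integral>\<^sup>+t. ennreal (t ^ m) * indicator {0..s} t \<partial>lborel)"
    using assms AE_lborel_singleton[of s]
    by (intro nn_integral_cong_AE) (auto split: split_indicator)
  then show ?thesis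
    using nn_integral_power_Icc[of s m] assms
    by (simp add: nn_integral_uniform_measure divide_ennreal_def)
qed

lemma nn_integral_PiM_uniform01_prod_indicator:
  assumes "finite C" "t \<in> {0..1}"
  shows "(\<integral>\<^sup>+y. (\<Prod>c\<in>C. indicator {..<t} (y c)) \<partial>PiM C (\<lambda>_::'i. uniform01)) = ennreal (t ^ card C)"
proof -
  have "(\<integral>\<^sup>+y. (\<Prod>c\<in>C. indicator {..<t} (y c)) \<partial>PiM C (\<lambda>_::'i. uniform01))
      = (\<Prod>c\<in>C. \<integral>\<^sup>+s. indicator {..<t} s \<partial>uniform01)"
    by (rule U.product_nn_integral_prod) (use assms in \<open>auto intro!: borel_measurable_indicator\<close>)
  also have "\<dots> = (\<Prod>c\<in>C. ennreal t)"
  proof -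
    have "{0..1} \<inter> {..<t} = {0..<t}" using assms(2) by auto
    then show ?thesis using assms(2) by (simp add: divide_ennreal_def)
  qed
  finally show ?thesis using assms by (simp add: prod_ennreal ennreal_power)
qed

text \<open>Integrating out a coordinate \<open>a\<close> that dominates the fresh coordinates \<open>C\<close>: given
  \<open>x a = t\<close>, the coordinates in \<open>C\<close> contribute the factor \<open>t ^ card C\<close>.\<close>

lemma nn_integral_PiM_dominating:
  fixes F :: "('i \<Rightarrow> real) \<Rightarrow> real \<Rightarrow> ennreal"
  assumes fin: "finite I" "finite C" and disj: "a \<notin> I" "a \<notin> C" "C \<inter> I = {}"
    and F[measurable]: "(\<lambda>(x, t). F x t) \<in> borel_measurable (PiM I (\<lambda>_. uniform01) \<Otimes>\<^sub>M uniform01)"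
  shows "(\<integral>\<^sup>+x. F (restrict x I) (x a) * (\<Prod>c\<in>C. indicator {..<x a} (x c)) \<partial>PiM (insert a (C \<union> I)) (\<lambda>_. uniform01))
       = (\<integral>\<^sup>+t. ennreal (t ^ card C) * (\<integral>\<^sup>+x. F x t \<partial>PiM I (\<lambda>_. uniform01)) \<partial>uniform01)"
proof -
  let ?M = "\<lambda>_::'i. uniform01"
  have [measurable]: "Measurable.pred (PiM (insert a (C \<union> I)) ?M) (\<lambda>x. x c \<in> {..<x a})" if "c \<in> C" for c
    using that by simp
  have "(\<integral>\<^sup>+x. F (restrict x I) (x a) * (\<Prod>c\<in>C. indicator {..<x a} (x c)) \<partial>PiM (insert a (C \<union> I)) ?M)
     = (\<integral>\<^sup>+t. \<integral>\<^sup>+x. F (restrict (x(a:=t)) I) t * (\<Prod>c\<in>C. indicator {..<t} ((x(a:=t)) c)) \<partial>PiM (C \<union> I) ?M \<partial>uniform01)"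
    by (subst U.product_nn_integral_insert_rev) (use fin disj in auto)
  also have "\<dots> = (\<integral>\<^sup>+t. \<integral>\<^sup>+x. F (restrict x I) t * (\<Prod>c\<in>C. indicator {..<t} (x c)) \<partial>PiM (I \<union> C) ?M \<partial>uniform01)"
  proof -
    have r: "restrict (x(a:=t)) I = restrict x I" for x t
      using disj by (auto simp: restrict_def)
    have p: "(\<Prod>c\<in>C. indicator {..<t} ((x(a:=t)) c)) = (\<Prod>c\<in>C. indicator {..<t} (x c) :: ennreal)" for x and t :: real
      using disj by (intro prod.cong) auto
    show ?thesis by (simp only: r p sup_commute[of C I])
  qed
  also have "\<dots> = (\<integral>\<^sup>+t. ennreal (t ^ card C) * (\<integral>\<^sup>+x. F x t \<partial>PiM I ?M) \<partial>uniform01)"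
  proof (intro nn_integral_cong_AE, use AE_uniform01 in eventually_elim)
    case (elim t)
    have "(\<integral>\<^sup>+x. F (restrict x I) t * (\<Prod>c\<in>C. indicator {..<t} (x c)) \<partial>PiM (I \<union> C) ?M)
       = (\<integral>\<^sup>+x. \<integral>\<^sup>+y. F (restrict (merge I C (x, y)) I) t * (\<Prod>c\<in>C. indicator {..<t} (merge I C (x, y) c)) \<partial>PiM C ?M \<partial>PiM I ?M)"
      by (rule U.product_nn_integral_fold) (use fin disj in auto)
    also have "\<dots> = (\<integral>\<^sup>+x. \<integral>\<^sup>+y. F x t * (\<Prod>c\<in>C. indicator {..<t} (y c)) \<partial>PiM C ?M \<partial>PiM I ?M)"
    proof (intro nn_integral_cong)
      fix x y assume "x \<in> space (PiM I ?M)"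
      then have "restrict (merge I C (x, y)) I = x"
        by (auto simp: restrict_def merge_def space_PiM PiE_def extensional_def fun_eq_iff)
      moreover have "(\<Prod>c\<in>C. indicator {..<t} (merge I C (x, y) c)) = (\<Prod>c\<in>C. indicator {..<t} (y c) :: ennreal)"
        using disj by (intro prod.cong) (auto simp: merge_def)
      ultimately show "F (restrict (merge I C (x, y)) I) t * (\<Prod>c\<in>C. indicator {..<t} (merge I C (x, y) c))
          = F x t * (\<Prod>c\<in>C. indicator {..<t} (y c))"
        by simp
    qed
    also have "\<dots> = (\<integral>\<^sup>+x. ennreal (t ^ card C) * F x t \<partial>PiM I ?M)"
      by (simp add: nn_integral_cmult nn_integral_PiM_uniform01_prod_indicator[OF fin(2) elim] mult.commute)
    finally show ?case by (simp add: nn_integral_cmult)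
  qed
  finally show ?thesis .
qed

section \<open>Record chains\<close>

text \<open>A record chain lists, latest first, entries \<open>(a, C)\<close>: a coordinate \<open>a\<close> that has to beat
  the fresh competitors \<open>C\<close> and the previous entry's coordinate, hence (by transitivity) every
  coordinate seen so far. Its probability is the product of the reciprocal sizes of the
  successive pools, as for the records of a random permutation.\<close>

type_synonym 'i record_chain = "('i \<times> 'i set) list"

fun chain_pool :: "'i record_chain \<Rightarrow> 'i set" where
  "chain_pool [] = {}"
| "chain_pool ((a, C) # ss) = insert a (C \<union> chain_pool ss)"

fun chain_top_below :: "'i record_chain \<Rightarrow> ('i \<Rightarrow> real) \<Rightarrow> real \<Rightarrow> bool" where
  "chain_top_below [] x t = True"
| "chain_top_below ((a, C) # ss) x t = (x a < t)"

fun records :: "'i record_chain \<Rightarrow> ('i \<Rightarrow> real) \<Rightarrow> bool" where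
  "records [] x = True"
| "records ((a, C) # ss) x = (records ss x \<and> (\<forall>c\<in>C. x c < x a) \<and> chain_top_below ss x (x a))"

fun chain_wf :: "'i record_chain \<Rightarrow> bool" where
  "chain_wf [] = True"
| "chain_wf ((a, C) # ss) = (chain_wf ss \<and> finite C \<and> a \<notin> C \<and> a \<notin> chain_pool ss \<and> C \<inter> chain_pool ss = {})"

fun chain_denom :: "'i record_chain \<Rightarrow> real" where
  "chain_denom [] = 1"
| "chain_denom ((a, C) # ss) = real (card (chain_pool ((a, C) # ss))) * chain_denom ss"

lemma finite_chain_pool: "chain_wf ss \<Longrightarrow> finite (chain_pool ss)"
  by (induction ss rule: chain_pool.induct) auto

lemma chain_denom_pos: "chain_wf ss \<Longrightarrow> chain_denom ss > 0"
  by (induction ss rule: chain_pool.induct) (auto simp: card_gt_0_iff finite_chain_pool)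

lemma card_chain_pool_Cons:
  "chain_wf ((a, C) # ss) \<Longrightarrow> card (chain_pool ((a, C) # ss)) = Suc (card C + card (chain_pool ss))"
  by (simp add: card_Un_disjoint finite_chain_pool)

lemma chain_top_below_cong:
  "(\<And>i. i \<in> chain_pool ss \<Longrightarrow> x i = y i) \<Longrightarrow> chain_top_below ss x t = chain_top_below ss y t"
  by (cases "(ss, x, t)" rule: chain_top_below.cases) auto

lemma records_cong: "(\<And>i. i \<in> chain_pool ss \<Longrightarrow> x i = y i) \<Longrightarrow> records ss x = records ss y"
proof (induction ss rule: chain_pool.induct)
  case (2 a C ss)
  then show ?case using chain_top_below_cong[of ss x y] by auto
qed simp

lemma records_restrict: "records ss (restrict x J) = records ss x" if "chain_pool ss \<subseteq> J"
  using that by (intro records_cong) auto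

lemma measurable_chain_top_below:
  assumes "chain_pool ss \<subseteq> J"
    and [measurable]: "f \<in> measurable N (PiM J (\<lambda>_. uniform01))" "g \<in> borel_measurable N"
  shows "Measurable.pred N (\<lambda>w. chain_top_below ss (f w) (g w))"
proof (cases ss)
  case (Cons s ss')
  obtain a C where "s = (a, C)" by (cases s)
  with assms(1) Cons have "a \<in> J" by auto
  then have "(\<lambda>w. f w a) \<in> borel_measurable N"
    using measurable_compose[OF assms(2) measurable_component_uniform01] by (simp add: comp_def)
  with Cons \<open>s = (a, C)\<close> show ?thesis
    unfolding Measurable.pred_def by (simp add: borel_measurable_less assms(3))
qed simp

lemma measurable_records:
  "chain_pool ss \<subseteq> J \<Longrightarrow> chain_wf ss \<Longrightarrow> Measurable.pred (PiM J (\<lambda>_. uniform01)) (\<lambda>x. records ss x)"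
proof (induction ss rule: chain_pool.induct)
  case (2 a C ss)
  then have J: "a \<in> J" "C \<subseteq> J" "finite C" and ss: "chain_pool ss \<subseteq> J" "chain_wf ss" by auto
  have "Measurable.pred (PiM J (\<lambda>_. uniform01)) (\<lambda>x. x c < x a)" if "c \<in> C" for c
    using that J unfolding Measurable.pred_def by (intro borel_measurable_less) auto
  then have "Measurable.pred (PiM J (\<lambda>_. uniform01)) (\<lambda>x. \<forall>c\<in>C. x c < x a)"
    using J(3) by (rule pred_intros_finite(3)[rotated])
  moreover have "Measurable.pred (PiM J (\<lambda>_. uniform01)) (\<lambda>x. chain_top_below ss x (x a))"
    using ss(1) J(1) by (intro measurable_chain_top_below) auto
  ultimately show ?case using 2(1)[OF ss] by (simp add: pred_intros_logic)
qed (simp add: Measurable.pred_def)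

lemma prod_indicator_eq_of_bool:
  "finite C \<Longrightarrow> (\<Prod>c\<in>C. indicator A (x c)) = (of_bool (\<forall>c\<in>C. x c \<in> A) :: 'a::comm_semiring_1)"
  by (induction C rule: finite_induct) (auto simp: indicator_def)

lemma nn_integral_records_Cons:
  fixes ss :: "'i record_chain"
  assumes wf: "chain_wf ((a, C) # ss)" and [measurable]: "g \<in> borel_measurable borel"
  shows "(\<integral>\<^sup>+x. of_bool (records ((a, C) # ss) x) * g (x a) \<partial>PiM (chain_pool ((a, C) # ss)) (\<lambda>_. uniform01))
       = (\<integral>\<^sup>+t. ennreal (t ^ card C) * g t *
            (\<integral>\<^sup>+y. of_bool (records ss y \<and> chain_top_below ss y t) \<partial>PiM (chain_pool ss) (\<lambda>_. uniform01)) \<partial>uniform01)"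
proof -
  let ?M = "\<lambda>_::'i. uniform01"
  let ?I = "chain_pool ss"
  define F where "F y s = of_bool (records ss y \<and> chain_top_below ss y s) * g s" for y s
  have wf': "chain_wf ss" "finite C" "a \<notin> C" "a \<notin> ?I" "C \<inter> ?I = {}" using wf by auto
  have "(\<lambda>(y, s). F y s) \<in> borel_measurable (PiM ?I ?M \<Otimes>\<^sub>M uniform01)"
  proof -
    have [measurable]: "Measurable.pred (PiM ?I ?M \<Otimes>\<^sub>M uniform01) (\<lambda>p. records ss (fst p))"
      using measurable_compose[OF measurable_fst measurable_records[OF order_refl wf'(1)], of uniform01] by (simp add: comp_def)
    have [measurable]: "Measurable.pred (PiM ?I ?M \<Otimes>\<^sub>M uniform01) (\<lambda>p. chain_top_below ss (fst p) (snd p))"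
      by (intro measurable_chain_top_below) (auto simp: measurable_cong_sets[OF refl, of _ uniform01 borel])
    show ?thesis unfolding F_def case_prod_beta of_bool_def by measurable
  qed
  note step = nn_integral_PiM_dominating[OF finite_chain_pool[OF wf'(1)] wf'(2,4,3,5) this]
  have restr: "records ss (restrict x ?I) = records ss x" "chain_top_below ss (restrict x ?I) t = chain_top_below ss x t"
    for x :: "'i \<Rightarrow> real" and t
    by (simp add: records_restrict) (rule chain_top_below_cong, simp)
  have "of_bool (records ((a, C) # ss) x) * g (x a)
      = F (restrict x ?I) (x a) * (\<Prod>c\<in>C. indicator {..<x a} (x c))" for x
    using wf'(2) by (auto simp: F_def prod_indicator_eq_of_bool restr)
  then have "(\<integral>\<^sup>+x. of_bool (records ((a, C) # ss) x) * g (x a) \<partial>PiM (chain_pool ((a, C) # ss)) ?M)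
      = (\<integral>\<^sup>+t. ennreal (t ^ card C) * (\<integral>\<^sup>+y. F y t \<partial>PiM ?I ?M) \<partial>uniform01)"
    by (simp only: chain_pool.simps step)
  also have "\<dots> = (\<integral>\<^sup>+t. ennreal (t ^ card C) * g t *
            (\<integral>\<^sup>+y. of_bool (records ss y \<and> chain_top_below ss y t) \<partial>PiM ?I ?M) \<partial>uniform01)"
  proof (intro nn_integral_cong)
    fix t :: real
    have "(\<lambda>y. of_bool (records ss y \<and> chain_top_below ss y t) :: ennreal) \<in> borel_measurable (PiM ?I ?M)"
      using measurable_records[OF order_refl wf'(1)] measurable_chain_top_below[OF order_refl measurable_ident_sets[OF refl] measurable_const[of t]]
      unfolding of_bool_def by measurable
    then show "ennreal (t ^ card C) * (\<integral>\<^sup>+y. F y t \<partial>PiM ?I ?M)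
        = ennreal (t ^ card C) * g t * (\<integral>\<^sup>+y. of_bool (records ss y \<and> chain_top_below ss y t) \<partial>PiM ?I ?M)"
      unfolding F_def by (simp add: nn_integral_cmult mult_ac)
  qed
  finally show ?thesis .
qed

lemma ennreal_mult_power_divide:
  assumes "0 \<le> t" "0 < d"
  shows "ennreal (t ^ c) * ennreal (t ^ m / d) = ennreal (1 / d) * ennreal (t ^ (c + m))"
  using assms by (simp add: ennreal_mult'[symmetric] power_add field_simps)

lemma ennreal_divide_mult_divide_Suc:
  assumes "0 < d"
  shows "ennreal (1 / d) * ennreal (s / Suc n) = ennreal (s / (real (Suc n) * d))"
  using assms by (simp add: ennreal_mult'[symmetric] field_simps del: of_nat_Suc)

lemma nn_integral_records_top_below:
  fixes ss :: "'i record_chain"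
  assumes "chain_wf ss" "t0 \<in> {0..1}"
  shows "(\<integral>\<^sup>+x. of_bool (records ss x \<and> chain_top_below ss x t0) \<partial>PiM (chain_pool ss) (\<lambda>_. uniform01))
       = ennreal (t0 ^ card (chain_pool ss) / chain_denom ss)"
  using assms
proof (induction ss arbitrary: t0 rule: chain_pool.induct)
  case 1
  interpret prob_space "PiM {} (\<lambda>_::'i. uniform01)"
    by (rule prob_space_PiM) (auto intro: prob_space_uniform01)
  show ?case by (simp add: emeasure_space_1)
next
  case (2 a C ss)
  let ?I = "chain_pool ss"
  have wf: "chain_wf ss" and pos: "chain_denom ss > 0"
    using 2(2) chain_denom_pos by auto
  have "(\<integral>\<^sup>+x. of_bool (records ((a, C) # ss) x \<and> chain_top_below ((a, C) # ss) x t0) \<partial>PiM (chain_pool ((a, C) # ss)) (\<lambda>_. uniform01))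
      = (\<integral>\<^sup>+x. of_bool (records ((a, C) # ss) x) * indicator {..<t0} (x a) \<partial>PiM (chain_pool ((a, C) # ss)) (\<lambda>_. uniform01))"
    by (intro nn_integral_cong) (simp add: indicator_def)
  also have "\<dots> = (\<integral>\<^sup>+t. ennreal (t ^ card C) * indicator {..<t0} t *
      (\<integral>\<^sup>+y. of_bool (records ss y \<and> chain_top_below ss y t) \<partial>PiM ?I (\<lambda>_. uniform01)) \<partial>uniform01)"
    by (rule nn_integral_records_Cons[OF 2(2)]) simp
  also have "\<dots> = (\<integral>\<^sup>+t. ennreal (1 / chain_denom ss) * (ennreal (t ^ (card C + card ?I)) * indicator {..<t0} t) \<partial>uniform01)"
  proof (intro nn_integral_cong_AE, use AE_uniform01 in eventually_elim)
    case (elim t)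
    then show ?case
      using 2(1)[OF wf elim] ennreal_mult_power_divide[of t "chain_denom ss"] pos
      by (simp add: mult_ac)
  qed
  also have "\<dots> = ennreal (1 / chain_denom ss) * ennreal (t0 ^ Suc (card C + card ?I) / Suc (card C + card ?I))"
    using 2(3) by (simp add: nn_integral_cmult nn_integral_uniform01_power_below)
  also have "\<dots> = ennreal (t0 ^ card (chain_pool ((a, C) # ss)) / chain_denom ((a, C) # ss))"
    unfolding chain_denom.simps card_chain_pool_Cons[OF 2(2)] by (rule ennreal_divide_mult_divide_Suc[OF pos])
  finally show ?case .
qed

lemma nn_integral_records:
  fixes ss :: "'i record_chain"
  assumes "chain_wf ss"
  shows "(\<integral>\<^sup>+x. of_bool (records ss x) \<partial>PiM (chain_pool ss) (\<lambda>_. uniform01)) = ennreal (1 / chain_denom ss)"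
proof (cases ss)
  case Nil
  then show ?thesis using nn_integral_records_top_below[OF assms, of 1] by simp
next
  case (Cons s ss')
  obtain a C where s: "s = (a, C)" by (cases s)
  have wf: "chain_wf ss'" and pos: "chain_denom ss' > 0"
    using assms Cons s chain_denom_pos by auto
  have "(\<integral>\<^sup>+x. of_bool (records ss x) \<partial>PiM (chain_pool ss) (\<lambda>_. uniform01))
      = (\<integral>\<^sup>+t. ennreal (t ^ card C) * 1 *
          (\<integral>\<^sup>+y. of_bool (records ss' y \<and> chain_top_below ss' y t) \<partial>PiM (chain_pool ss') (\<lambda>_. uniform01)) \<partial>uniform01)"
    using nn_integral_records_Cons[of a C ss' "\<lambda>_. 1"] assms Cons s by simp
  also have "\<dots> = (\<integral>\<^sup>+t. ennreal (1 / chain_denom ss') * ennreal (t ^ (card C + card (chain_pool ss'))) \<partial>uniform01)"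
  proof (intro nn_integral_cong_AE, use AE_uniform01 in eventually_elim)
    case (elim t)
    then show ?case
      using nn_integral_records_top_below[OF wf elim] ennreal_mult_power_divide[of t "chain_denom ss'"] pos
      by simp
  qed
  also have "\<dots> = ennreal (1 / chain_denom ss') * ennreal (1 / Suc (card C + card (chain_pool ss')))"
    by (simp add: nn_integral_cmult nn_integral_uniform01_power)
  also have "\<dots> = ennreal (1 / chain_denom ss)"
    unfolding Cons s chain_denom.simps card_chain_pool_Cons[OF assms[unfolded Cons s]]
    by (rule ennreal_divide_mult_divide_Suc[OF pos])
  finally show ?thesis .
qed

lemma emeasure_PiM_UNIV_restrict:
  fixes P :: "('i \<Rightarrow> real) \<Rightarrow> bool"
  assumes "finite J" and S: "{x \<in> space (PiM J (\<lambda>_. uniform01)). P x} \<in> sets (PiM J (\<lambda>_. uniform01))"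
  shows "emeasure (PiM UNIV (\<lambda>_. uniform01)) {U \<in> space (PiM UNIV (\<lambda>_. uniform01)). P (restrict U J)}
       = emeasure (PiM J (\<lambda>_. uniform01)) {x \<in> space (PiM J (\<lambda>_. uniform01)). P x}"
proof -
  let ?M = "\<lambda>_::'i. uniform01"
  have m: "(\<lambda>x. restrict x J) \<in> measurable (PiM UNIV ?M) (PiM J ?M)"
    by (rule measurable_restrict_subset) simp
  have "emeasure (PiM J ?M) {x \<in> space (PiM J ?M). P x}
      = emeasure (distr (PiM UNIV ?M) (PiM J ?M) (\<lambda>x. restrict x J)) {x \<in> space (PiM J ?M). P x}"
    using assms(1) by (simp add: U.distr_PiM_restrict_finite)
  also have "\<dots> = emeasure (PiM UNIV ?M) ((\<lambda>x. restrict x J) -` {x \<in> space (PiM J ?M). P x} \<inter> space (PiM UNIV ?M))"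
    by (rule emeasure_distr[OF m S])
  also have "(\<lambda>x. restrict x J) -` {x \<in> space (PiM J ?M). P x} \<inter> space (PiM UNIV ?M)
      = {U \<in> space (PiM UNIV ?M). P (restrict U J)}"
    using measurable_space[OF m] by auto
  finally show ?thesis by simp
qed

lemma emeasure_records:
  fixes ss :: "'i record_chain"
  assumes "chain_wf ss"
  shows "emeasure (PiM UNIV (\<lambda>_. uniform01)) {U \<in> space (PiM UNIV (\<lambda>_. uniform01)). records ss U}
       = ennreal (1 / chain_denom ss)"
proof -
  let ?M = "\<lambda>_::'i. uniform01"
  let ?J = "chain_pool ss"
  have S: "{x \<in> space (PiM ?J ?M). records ss x} \<in> sets (PiM ?J ?M)"
    using measurable_records[OF order_refl assms] unfolding Measurable.pred_def by simp
  have "emeasure (PiM UNIV ?M) {U \<in> space (PiM UNIV ?M). records ss U}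
      = emeasure (PiM ?J ?M) {x \<in> space (PiM ?J ?M). records ss x}"
    using emeasure_PiM_UNIV_restrict[OF finite_chain_pool[OF assms] S] by (simp add: records_restrict)
  also have "\<dots> = (\<integral>\<^sup>+x. indicator {x \<in> space (PiM ?J ?M). records ss x} x \<partial>PiM ?J ?M)"
    using S by simp
  also have "\<dots> = (\<integral>\<^sup>+x. of_bool (records ss x) \<partial>PiM ?J ?M)"
    by (intro nn_integral_cong) (simp add: indicator_def)
  finally show ?thesis by (simp add: nn_integral_records[OF assms])
qed

lemma emeasure_PiM_uniform01_tie:
  fixes e e' :: 'i
  assumes "e \<noteq> e'"
  shows "emeasure (PiM UNIV (\<lambda>_. uniform01)) {U \<in> space (PiM UNIV (\<lambda>_. uniform01)). U e = U e'} = 0"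
proof -
  let ?M = "\<lambda>_::'i. uniform01"
  have m: "(\<lambda>x. x j) \<in> borel_measurable (PiM {e, e'} ?M)" if "j \<in> {e, e'}" for j
    using that by (rule measurable_component_uniform01)
  have S: "{x \<in> space (PiM {e, e'} ?M). x e = x e'} \<in> sets (PiM {e, e'} ?M)"
    using borel_measurable_eq[OF m m] by simp
  have "emeasure (PiM UNIV ?M) {U \<in> space (PiM UNIV ?M). U e = U e'}
      = (\<integral>\<^sup>+x. indicator {x \<in> space (PiM {e, e'} ?M). x e = x e'} x \<partial>PiM {e, e'} ?M)"
    using emeasure_PiM_UNIV_restrict[of "{e, e'}" "\<lambda>x. x e = x e'"] S by simp
  also have "\<dots> = (\<integral>\<^sup>+x. of_bool (x e = x e') \<partial>PiM (insert e {e'}) ?M)"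
    by (intro nn_integral_cong) (simp add: indicator_def)
  also have "\<dots> = (\<integral>\<^sup>+t. \<integral>\<^sup>+x. indicator {t} (x e') \<partial>PiM {e'} ?M \<partial>uniform01)"
    using assms m
    by (subst U.product_nn_integral_insert_rev) (auto simp: of_bool_def indicator_def eq_commute)
  also have "\<dots> = (\<integral>\<^sup>+t. 0 \<partial>uniform01)"
  proof (intro nn_integral_cong)
    fix t :: real
    show "(\<integral>\<^sup>+x. indicator {t} (x e') \<partial>PiM {e'} ?M) = 0"
      using emeasure_lborel_countable[of "{0..1} \<inter> {t}"]
      by (subst U.product_nn_integral_singleton) auto
  qed
  finally show ?thesis by simp
qed

lemma AE_PiM_uniform01_inj: "AE U in PiM UNIV (\<lambda>_::'i::countable. uniform01). inj U"
proof -
  have "AE U in PiM UNIV (\<lambda>_::'i. uniform01). \<forall>e\<in>UNIV. \<forall>e'\<in>UNIV. e \<noteq> e' \<longrightarrow> U e \<noteq> U e'"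
  proof (intro AE_ball_countable' countableI_type)
    fix e e' :: 'i
    show "AE U in PiM UNIV (\<lambda>_. uniform01). e \<noteq> e' \<longrightarrow> U e \<noteq> U e'"
    proof (cases "e = e'")
      case False
      have "{U \<in> space (PiM UNIV (\<lambda>_::'i. uniform01)). U e = U e'} \<in> sets (PiM UNIV (\<lambda>_. uniform01))"
        using borel_measurable_eq[OF measurable_component_uniform01 measurable_component_uniform01] by simp
      then show ?thesis
        using emeasure_PiM_uniform01_tie[OF False] by (simp add: AE_iff_measurable[OF _ refl])
    qed simp
  qed
  then show ?thesis by eventually_elim (auto simp: inj_def)
qed

section \<open>The tree and the greedy walk\<close>

definition children :: "nat \<Rightarrow> nat list \<Rightarrow> nat list set" where
  "children l w = (if w = [] then {[i] | i. i < l} else {i # w | i. i < l - 1})"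

lemma nbrs_eq_children: "nbrs l w = children l w \<union> (if w = [] then {} else {tl w})"
  unfolding nbrs_def children_def by simp

lemma children_eq_image: "children l w = (if w = [] then (\<lambda>i. [i]) ` {..<l} else (\<lambda>i. i # w) ` {..<l - 1})"
  unfolding children_def by auto

lemma finite_children [simp]: "finite (children l w)"
  by (simp add: children_eq_image)

lemma card_children: "card (children l w) = (if w = [] then l else l - 1)"
  by (simp add: children_eq_image card_image inj_on_def)

lemma childrenD: "y \<in> children l w \<Longrightarrow> y \<noteq> [] \<and> tl y = w \<and> length y = Suc (length w)"
  unfolding children_def by (auto split: if_splits)

lemma finite_nbrs: "finite (nbrs l w)"
  by (simp add: nbrs_eq_children)

lemma nbrs_nonempty: "l \<ge> 2 \<Longrightarrow> nbrs l w \<noteq> {}"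
proof -
  assume "l \<ge> 2"
  then have "(if w = [] then [0] else tl w) \<in> nbrs l w"
    by (simp add: nbrs_def)
  then show ?thesis by blast
qed

lemma tree_vertex_Cons: "tree_vertex l (i # w) \<Longrightarrow> tree_vertex l w \<and> i # w \<in> children l w"
  by (cases "w = []") (auto simp: tree_vertex_def children_def)

lemma tree_vertex_child: "tree_vertex l w \<Longrightarrow> y \<in> children l w \<Longrightarrow> tree_vertex l y"
  by (cases "w = []") (auto simp: tree_vertex_def children_def)

lemma edge_key_child: "y \<in> children l w \<Longrightarrow> edge_key w y = y"
  using childrenD[of y l w] by (simp add: edge_key_def)

lemma edge_key_parent: "w \<noteq> [] \<Longrightarrow> edge_key w (tl w) = w"
  by (cases w) (auto simp: edge_key_def)

lemma inj_on_edge_key: "inj_on (edge_key x) (nbrs l x)"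
proof (rule inj_onI)
  have nbr: "z \<in> children l x \<or> (x \<noteq> [] \<and> z = tl x)" if "z \<in> nbrs l x" for z
    using that unfolding nbrs_eq_children by (simp split: if_splits)
  have child_ne_parent: "edge_key x y \<noteq> edge_key x (tl x)" if "y \<in> children l x" "x \<noteq> []" for y
    using that childrenD[of y l x] by (auto simp: edge_key_child edge_key_parent)
  fix y y' assume "y \<in> nbrs l x" "y' \<in> nbrs l x" "edge_key x y = edge_key x y'"
  with nbr[of y] nbr[of y'] child_ne_parent[of y] child_ne_parent[of y'] show "y = y'"
    by (auto simp: edge_key_child)
qed

definition strictly_best :: "nat \<Rightarrow> (nat list \<Rightarrow> real) \<Rightarrow> nat list \<Rightarrow> nat list \<Rightarrow> bool" where
  "strictly_best l U x y \<longleftrightarrow> (\<forall>y' \<in> nbrs l x. y' \<noteq> y \<longrightarrow> U (edge_key x y') < U (edge_key x y))"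

lemma zmap_is_best:
  assumes "l \<ge> 2"
  shows "zmap l U x \<in> nbrs l x \<and> (\<forall>y' \<in> nbrs l x. U (edge_key x y') \<le> U (edge_key x (zmap l U x)))"
proof -
  define f where "f y = U (edge_key x y)" for y
  have fin: "finite (f ` nbrs l x)"
    using finite_nbrs by (rule finite_imageI)
  have "f ` nbrs l x \<noteq> {}"
    using nbrs_nonempty[OF assms] by blast
  with fin have "Max (f ` nbrs l x) \<in> f ` nbrs l x"
    by (rule Max_in)
  then obtain y where y: "y \<in> nbrs l x" "f y = Max (f ` nbrs l x)"
    by (auto simp del: Max_in)
  have "\<forall>y' \<in> nbrs l x. f y' \<le> f y"
    unfolding y(2) using Max_ge[OF fin] by blast
  with y(1) have "y \<in> nbrs l x \<and> (\<forall>y' \<in> nbrs l x. f y' \<le> f y)" by blast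
  then show ?thesis
    unfolding zmap_def f_def by (rule someI)
qed

lemma zmap_eq_if_strictly_best:
  assumes "strictly_best l U x y" "y \<in> nbrs l x"
  shows "zmap l U x = y"
  unfolding zmap_def
proof (rule some_equality)
  show "y \<in> nbrs l x \<and> (\<forall>y' \<in> nbrs l x. U (edge_key x y') \<le> U (edge_key x y))"
    using assms by (auto simp: strictly_best_def less_imp_le)
next
  fix z assume z: "z \<in> nbrs l x \<and> (\<forall>y' \<in> nbrs l x. U (edge_key x y') \<le> U (edge_key x z))"
  then show "z = y"
    using assms unfolding strictly_best_def by (meson not_le)
qed

lemma strictly_best_zmap:
  assumes "l \<ge> 2" "inj U"
  shows "strictly_best l U x (zmap l U x)"
  unfolding strictly_best_def
proof (intro ballI impI)
  fix y' assume y': "y' \<in> nbrs l x" "y' \<noteq> zmap l U x"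
  have z: "zmap l U x \<in> nbrs l x" and le: "U (edge_key x y') \<le> U (edge_key x (zmap l U x))"
    using zmap_is_best[OF assms(1), of U x] y'(1) by auto
  have "edge_key x y' \<noteq> edge_key x (zmap l U x)"
    using inj_on_edge_key y'(2) y'(1) z by (auto dest: inj_onD)
  then have "U (edge_key x y') \<noteq> U (edge_key x (zmap l U x))"
    using assms(2) by (auto dest: injD)
  with le show "U (edge_key x y') < U (edge_key x (zmap l U x))" by simp
qed

section \<open>Bully events as record chains\<close>

text \<open>The chain for the event that the walk from the root runs along the path to \<open>v\<close>: each
  path edge beats its sibling edges and (transitively) all earlier edges.\<close>

fun path_chain :: "nat \<Rightarrow> nat list \<Rightarrow> nat list record_chain" where
  "path_chain l [] = []"
| "path_chain l (i # w) = (i # w, children l w - {i # w}) # path_chain l w"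

text \<open>Additionally the last edge beats the edges to the children of its endpoint, so that the
  walk turns back there.\<close>

fun bully_chain :: "nat \<Rightarrow> nat list \<Rightarrow> nat list record_chain" where
  "bully_chain l [] = []"
| "bully_chain l (i # w) = (i # w, (children l w - {i # w}) \<union> children l (i # w)) # path_chain l w"

lemma path_chain_poolD: "x \<in> chain_pool (path_chain l v) \<Longrightarrow> x \<noteq> [] \<and> length x \<le> length v"
proof (induction v)
  case (Cons i w)
  then show ?case using childrenD[of x l w] by auto
qed simp

lemma chain_top_below_path_chain [simp]: "chain_top_below (path_chain l w) U t \<longleftrightarrow> w = [] \<or> U w < t"
  by (cases w) auto

lemma chain_wf_path_chain: "chain_wf (path_chain l v)"
proof (induction v)
  case (Cons i w)
  then show ?case
    using path_chain_poolD[of _ l w] childrenD[of _ l w] by fastforce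
qed simp

lemma chain_wf_bully_chain: "chain_wf (bully_chain l v)"
proof (cases v)
  case (Cons i w)
  then show ?thesis
    using chain_wf_path_chain[of l w] path_chain_poolD[of _ l w] childrenD[of _ l w]
      childrenD[of _ l "i # w"] by fastforce
qed simp

lemma strictly_best_iff:
  "strictly_best l U w y \<longleftrightarrow>
     (\<forall>c \<in> children l w. c \<noteq> y \<longrightarrow> U c < U (edge_key w y)) \<and>
     (w \<noteq> [] \<longrightarrow> tl w \<noteq> y \<longrightarrow> U w < U (edge_key w y))"
proof -
  have "(\<forall>c \<in> children l w. c \<noteq> y \<longrightarrow> U (edge_key w c) < U (edge_key w y))
      \<longleftrightarrow> (\<forall>c \<in> children l w. c \<noteq> y \<longrightarrow> U c < U (edge_key w y))"
    by (rule ball_cong) (simp_all add: edge_key_child)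
  then show ?thesis
    using edge_key_parent[of w] unfolding strictly_best_def nbrs_eq_children by auto
qed

lemma records_path_chain_Cons:
  assumes "i # w \<in> children l w"
  shows "records (path_chain l (i # w)) U \<longleftrightarrow> records (path_chain l w) U \<and> strictly_best l U w (i # w)"
proof -
  have "tl w \<noteq> i # w"
    by (metis impossible_Cons length_tl diff_le_self)
  then show ?thesis
    unfolding strictly_best_iff edge_key_child[OF assms] by auto
qed

lemma records_bully_chain:
  "records (bully_chain l (i # w)) U \<longleftrightarrow> records (path_chain l (i # w)) U \<and> strictly_best l U (i # w) w"
proof -
  have "w \<notin> children l (i # w)"
    using childrenD[of w l "i # w"] by auto
  then show ?thesis
    using edge_key_parent[of "i # w"] unfolding strictly_best_iff by auto
qed

lemma zpath_0 [simp]: "zpath l U 0 = []"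
  by (simp add: zpath_def)

lemma zpath_Suc: "zpath l U (Suc j) = zmap l U (zpath l U j)"
  by (simp add: zpath_def)

definition walks_to :: "nat \<Rightarrow> (nat list \<Rightarrow> real) \<Rightarrow> nat list \<Rightarrow> bool" where
  "walks_to l U v \<longleftrightarrow> (\<forall>j \<le> length v. zpath l U j = drop (length v - j) v)"

lemma walks_to_Nil: "walks_to l U []"
  by (simp add: walks_to_def)

lemma walks_to_Cons: "walks_to l U (i # w) \<longleftrightarrow> walks_to l U w \<and> zmap l U w = i # w"
proof
  assume a: "walks_to l U (i # w)"
  then have "zpath l U j = drop (length w - j) w" if "j \<le> length w" for j
    using that unfolding walks_to_def by (auto simp: Suc_diff_le)
  moreover have "zpath l U (Suc (length w)) = i # w"
    using a unfolding walks_to_def by auto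
  ultimately show "walks_to l U w \<and> zmap l U w = i # w"
    by (auto simp: walks_to_def zpath_Suc)
next
  assume a: "walks_to l U w \<and> zmap l U w = i # w"
  show "walks_to l U (i # w)"
    unfolding walks_to_def
  proof (intro allI impI)
    fix j assume "j \<le> length (i # w)"
    then consider "j \<le> length w" | "j = Suc (length w)" by fastforce
    then show "zpath l U j = drop (length (i # w) - j) (i # w)"
      by cases (use a in \<open>auto simp: walks_to_def zpath_Suc Suc_diff_le\<close>)
  qed
qed

lemma walks_to_iff_records:
  assumes "l \<ge> 2" "inj U" "tree_vertex l v"
  shows "walks_to l U v \<longleftrightarrow> records (path_chain l v) U"
  using assms(3)
proof (induction v)
  case Nil
  then show ?case by (simp add: walks_to_Nil)
next
  case (Cons i w)
  then have w: "tree_vertex l w" "i # w \<in> children l w"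
    using tree_vertex_Cons by auto
  then have "i # w \<in> nbrs l w"
    by (simp add: nbrs_eq_children)
  then have "zmap l U w = i # w \<longleftrightarrow> strictly_best l U w (i # w)"
    using strictly_best_zmap[OF assms(1,2)] zmap_eq_if_strictly_best by metis
  then show ?case
    using Cons.IH[OF w(1)] records_path_chain_Cons[OF w(2)] walks_to_Cons by blast
qed

lemma has_bully_Mtilde_iff:
  "has_bully l U \<and> Mtilde l U = k \<longleftrightarrow>
     zpath l U (k + 2) = zpath l U k \<and> (\<forall>m<k. zpath l U (m + 2) \<noteq> zpath l U m)"
  unfolding has_bully_def Mtilde_def
  by (metis (mono_tags, lifting) LeastI_ex Least_equality not_less_Least not_less)

lemma zpath_descends:
  assumes "l \<ge> 2" and no_bully: "\<forall>m<K. zpath l U (m + 2) \<noteq> zpath l U m" and "j \<le> Suc K"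
  shows "tree_vertex l (zpath l U j) \<and> length (zpath l U j) = j \<and>
    (j > 0 \<longrightarrow> zpath l U j \<in> children l (zpath l U (j - 1)))"
  using assms(3)
proof (induction j)
  case 0
  then show ?case by (simp add: tree_vertex_def)
next
  case (Suc j)
  let ?x = "zpath l U j"
  have IH: "tree_vertex l ?x" "length ?x = j" "j > 0 \<longrightarrow> ?x \<in> children l (zpath l U (j - 1))"
    using Suc by auto
  have "zpath l U (Suc j) \<in> nbrs l ?x"
    using zmap_is_best[OF assms(1)] by (simp add: zpath_Suc)
  moreover have "zpath l U (Suc j) \<noteq> tl ?x \<or> ?x = []"
  proof (rule ccontr)
    assume "\<not> ?thesis"
    then have "j > 0" "zpath l U (Suc j) = tl ?x"
      using IH(2) by (auto simp flip: length_greater_0_conv)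
    moreover from this have "tl ?x = zpath l U (j - 1)"
      using IH(3) childrenD by blast
    ultimately have "zpath l U ((j - 1) + 2) = zpath l U (j - 1)" "j - 1 < K"
      using Suc.prems by auto
    with no_bully show False by blast
  qed
  ultimately have "zpath l U (Suc j) \<in> children l ?x"
    by (auto simp: nbrs_eq_children split: if_splits)
  then show ?case
    using childrenD IH tree_vertex_child by fastforce
qed

lemma zpath_eq_drop:
  assumes "\<forall>j. 0 < j \<and> j \<le> Suc K \<longrightarrow> tl (zpath l U j) = zpath l U (j - 1)" and "d \<le> Suc K"
  shows "zpath l U (Suc K - d) = drop d (zpath l U (Suc K))"
  using assms(2)
proof (induction d)
  case (Suc d)
  have "zpath l U (Suc K - Suc d) = tl (zpath l U (Suc K - d))"
    using assms(1)[rule_format, of "Suc K - d"] Suc.prems by (simp add: Suc_diff_Suc)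
  with Suc show ?case by (simp add: drop_Suc tl_drop)
qed simp

lemma bully_event_iff_walks_to:
  assumes "l \<ge> 2" "length v = Suc k"
  shows "has_bully l U \<and> Mtilde l U = k \<and> zpath l U (Suc k) = v \<longleftrightarrow>
    walks_to l U v \<and> zmap l U v = tl v"
proof
  assume a: "has_bully l U \<and> Mtilde l U = k \<and> zpath l U (Suc k) = v"
  then have returns: "zpath l U (k + 2) = zpath l U k" and no_bully: "\<forall>m<k. zpath l U (m + 2) \<noteq> zpath l U m"
    using has_bully_Mtilde_iff by blast+
  have "\<forall>j. 0 < j \<and> j \<le> Suc k \<longrightarrow> tl (zpath l U j) = zpath l U (j - 1)"
    using zpath_descends[OF assms(1) no_bully] childrenD by blast
  then have drop: "zpath l U (Suc k - d) = drop d v" if "d \<le> Suc k" for d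
    using zpath_eq_drop[OF _ that] a by simp
  have "walks_to l U v"
    unfolding walks_to_def
  proof (intro allI impI)
    fix j assume "j \<le> length v"
    then show "zpath l U j = drop (length v - j) v"
      using drop[of "Suc k - j"] assms(2) by simp
  qed
  moreover have "zmap l U v = tl v"
    using a returns drop[of 1] by (simp add: zpath_Suc drop_Suc)
  ultimately show "walks_to l U v \<and> zmap l U v = tl v" ..
next
  assume a: "walks_to l U v \<and> zmap l U v = tl v"
  then have along: "zpath l U j = drop (Suc k - j) v" if "j \<le> Suc k" for j
    using that assms(2) unfolding walks_to_def by auto
  then have v: "zpath l U (Suc k) = v"
    by simp
  have "zpath l U (k + 2) = zpath l U k"
    using a v along[of k] by (simp add: zpath_Suc drop_Suc)
  moreover have "zpath l U (m + 2) \<noteq> zpath l U m" if "m < k" for m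
  proof -
    have "length (zpath l U (m + 2)) = m + 2" "length (zpath l U m) = m"
      using along[of m] along[of "m + 2"] that assms(2) by simp_all
    then show ?thesis by auto
  qed
  ultimately show "has_bully l U \<and> Mtilde l U = k \<and> zpath l U (Suc k) = v"
    using v has_bully_Mtilde_iff by blast
qed

lemma tree_vertex_bully:
  assumes "l \<ge> 2" "has_bully l U \<and> Mtilde l U = k"
  shows "tree_vertex l (zpath l U (Suc k)) \<and> length (zpath l U (Suc k)) = Suc k"
  using assms(2) zpath_descends[OF assms(1), of k U "Suc k"] by (simp add: has_bully_Mtilde_iff)

lemma bully_event_iff_records:
  assumes "l \<ge> 2" "inj U" "tree_vertex l v" "length v = Suc k"
  shows "has_bully l U \<and> Mtilde l U = k \<and> zpath l U (Suc k) = v \<longleftrightarrow> records (bully_chain l v) U"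
proof -
  obtain i w where v: "v = i # w"
    using assms(4) by (cases v) auto
  have "w \<in> nbrs l v"
    using v by (simp add: nbrs_def)
  then have "zmap l U v = w \<longleftrightarrow> strictly_best l U v w"
    using strictly_best_zmap[OF assms(1,2)] zmap_eq_if_strictly_best by metis
  then show ?thesis
    using bully_event_iff_walks_to[OF assms(1,4)] walks_to_iff_records[OF assms(1-3)]
      records_bully_chain v by auto
qed

lemma measurable_edge_weight [measurable]: "(\<lambda>U. U e) \<in> borel_measurable edge_weights"
  unfolding edge_weights_def by (rule measurable_component_uniform01) simp

lemma pred_edge_weight_le [measurable]: "Measurable.pred edge_weights (\<lambda>U. U e \<le> U e')"
  unfolding Measurable.pred_def by (rule borel_measurable_le) simp_all

text \<open>\<open>zmap l U x\<close> is a fixed choice from the set of maximising neighbours, and that set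
  ranges over the finitely many subsets of \<open>nbrs l x\<close>.\<close>

lemma measurable_zmap [measurable]: "(\<lambda>U. zmap l U x) \<in> measurable edge_weights (count_space UNIV)"
proof (subst measurable_count_space_eq2_countable, intro conjI ballI)
  fix y :: "nat list"
  let ?N = "nbrs l x"
  define best where "best U = {z \<in> ?N. \<forall>y' \<in> ?N. U (edge_key x y') \<le> U (edge_key x z)}" for U :: "nat list \<Rightarrow> real"
  let ?E = "\<lambda>T. {U \<in> space edge_weights. \<forall>z \<in> ?N. z \<in> T \<longleftrightarrow> (\<forall>y' \<in> ?N. U (edge_key x y') \<le> U (edge_key x z))}"
  let ?Ts = "{T. T \<subseteq> ?N \<and> (SOME z. z \<in> T) = y}"
  have zmap_best: "zmap l U x = (SOME z. z \<in> best U)" for U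
    unfolding zmap_def best_def by simp
  have E: "U \<in> ?E T \<longleftrightarrow> U \<in> space edge_weights \<and> best U = T" if "T \<subseteq> ?N" for U T
    using that unfolding best_def by auto
  have "(\<lambda>U. zmap l U x) -` {y} \<inter> space edge_weights = (\<Union>T \<in> ?Ts. ?E T)"
  proof (intro set_eqI iffI)
    fix U assume "U \<in> (\<lambda>U. zmap l U x) -` {y} \<inter> space edge_weights"
    then show "U \<in> (\<Union>T \<in> ?Ts. ?E T)"
      using E[of "best U" U] by (intro UN_I[of "best U"]) (auto simp: zmap_best best_def)
  next
    fix U assume "U \<in> (\<Union>T \<in> ?Ts. ?E T)"
    then obtain T where "T \<in> ?Ts" "U \<in> ?E T"
      by blast
    then show "U \<in> (\<lambda>U. zmap l U x) -` {y} \<inter> space edge_weights"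
      using E[of T U] by (auto simp: zmap_best)
  qed
  also have "\<dots> \<in> sets edge_weights"
  proof (rule sets.finite_UN)
    show "finite ?Ts"
      using finite_nbrs[of l x] by (auto intro: finite_subset[OF _ finite_Collect_subsets])
  qed measurable
  finally show "(\<lambda>U. zmap l U x) -` {y} \<inter> space edge_weights \<in> sets edge_weights" .
qed simp

lemma measurable_zpath [measurable]: "(\<lambda>U. zpath l U j) \<in> measurable edge_weights (count_space UNIV)"
proof (induction j)
  case (Suc j)
  then show ?case
    unfolding zpath_Suc by (rule measurable_compose_countable[OF measurable_zmap])
qed simp

lemma pred_zpath_eq [measurable]: "Measurable.pred edge_weights (\<lambda>U. zpath l U a = zpath l U b)"
proof -
  have "(\<lambda>U. (\<lambda>y U. zpath l U a = y) (zpath l U b) U) \<in> measurable edge_weights (count_space UNIV)"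
    by (rule measurable_compose_countable[OF _ measurable_zpath]) measurable
  then show ?thesis by simp
qed

lemma sets_bully_event:
  "{U \<in> space edge_weights. has_bully l U \<and> Mtilde l U = k \<and> zpath l U (Suc k) = v} \<in> sets edge_weights"
proof -
  have "{U \<in> space edge_weights. has_bully l U \<and> Mtilde l U = k \<and> zpath l U (Suc k) = v}
      = {U \<in> space edge_weights. zpath l U (k + 2) = zpath l U k \<and>
           (\<forall>m \<in> {..<k}. zpath l U (m + 2) \<noteq> zpath l U m) \<and> zpath l U (Suc k) = v}"
    using has_bully_Mtilde_iff by auto
  also have "\<dots> \<in> sets edge_weights"
    by measurable
  finally show ?thesis .
qed

lemma measure_bully_event:
  assumes "l \<ge> 2" "tree_vertex l v" "length v = Suc k"
  shows "measure edge_weights {U \<in> space edge_weights. has_bully l U \<and> Mtilde l U = k \<and> zpath l U (Suc k) = v}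
       = 1 / chain_denom (bully_chain l v)"
proof -
  let ?R = "{U \<in> space edge_weights. records (bully_chain l v) U}"
  have R: "?R \<in> sets edge_weights"
    using measurable_records[OF subset_UNIV chain_wf_bully_chain]
    unfolding edge_weights_def Measurable.pred_def by simp
  have "AE U in edge_weights. inj U"
    unfolding edge_weights_def by (rule AE_PiM_uniform01_inj)
  then have "measure edge_weights {U \<in> space edge_weights. has_bully l U \<and> Mtilde l U = k \<and> zpath l U (Suc k) = v}
      = measure edge_weights ?R"
    by (intro measure_eq_AE sets_bully_event R) (auto simp: bully_event_iff_records[OF assms(1) _ assms(2,3)])
  also have "\<dots> = 1 / chain_denom (bully_chain l v)"
    using emeasure_records[OF chain_wf_bully_chain, of l v] chain_denom_pos[OF chain_wf_bully_chain, of l v]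
    by (simp add: measure_def edge_weights_def)
  finally show ?thesis .
qed

section \<open>Counting\<close>

lemma card_chain_pool_path_chain:
  "tree_vertex l v \<Longrightarrow> card (chain_pool (path_chain l v)) = (if v = [] then 0 else l + (length v - 1) * (l - 1))"
proof (induction v)
  case (Cons i w)
  have w: "tree_vertex l w" "i # w \<in> children l w"
    using tree_vertex_Cons[OF Cons.prems] by auto
  have "children l w \<inter> chain_pool (path_chain l w) = {}"
    using path_chain_poolD[of _ l w] childrenD[of _ l w] by fastforce
  moreover have "chain_pool (path_chain l (i # w)) = children l w \<union> chain_pool (path_chain l w)"
    using w(2) by auto
  ultimately have "card (chain_pool (path_chain l (i # w))) = card (children l w) + card (chain_pool (path_chain l w))"
    using finite_chain_pool[OF chain_wf_path_chain[of l w]] by (simp add: card_Un_disjoint)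
  with Cons.IH[OF w(1)] show ?case
    by (cases w) (auto simp: card_children)
qed simp

lemma chain_denom_path_chain:
  "tree_vertex l v \<Longrightarrow> chain_denom (path_chain l v) = (\<Prod>j<length v. real (l + j * (l - 1)))"
proof (induction v)
  case (Cons i w)
  then have "tree_vertex l w"
    using tree_vertex_Cons by blast
  with Cons card_chain_pool_path_chain[OF Cons.prems] show ?case
    by (simp add: mult.commute)
qed simp

lemma chain_denom_bully_chain:
  assumes "tree_vertex l (i # w)"
  shows "chain_denom (bully_chain l (i # w))
       = real (l + Suc (length w) * (l - 1)) * (\<Prod>j<length w. real (l + j * (l - 1)))"
proof -
  have "children l (i # w) \<inter> chain_pool (path_chain l (i # w)) = {}"
    using path_chain_poolD[of _ l "i # w"] childrenD[of _ l "i # w"] by fastforce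
  then have "card (chain_pool (bully_chain l (i # w)))
      = card (children l (i # w)) + card (chain_pool (path_chain l (i # w)))"
    using finite_chain_pool[OF chain_wf_path_chain[of l "i # w"]]
    by (subst card_Un_disjoint[symmetric]) (auto intro!: arg_cong[where f = card])
  then show ?thesis
    using card_chain_pool_path_chain[OF assms] chain_denom_path_chain tree_vertex_Cons[OF assms]
    by (simp add: card_children)
qed

definition tree_level :: "nat \<Rightarrow> nat \<Rightarrow> nat list set" where
  "tree_level l m = {v. tree_vertex l v \<and> length v = m}"

lemma tree_level_1: "tree_level l (Suc 0) = (\<lambda>i. [i]) ` {..<l}"
  by (auto simp: tree_level_def tree_vertex_def length_Suc_conv)

lemma tree_level_Suc:
  "tree_level l (Suc (Suc k)) = (\<lambda>(i, w). i # w) ` ({..<l - 1} \<times> tree_level l (Suc k))"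
proof -
  have "tree_vertex l (i # w) \<longleftrightarrow> i < l - 1 \<and> tree_vertex l w" if "w \<noteq> []" for i w
    using that by (auto simp: tree_vertex_def)
  then show ?thesis
    by (fastforce simp: tree_level_def length_Suc_conv)
qed

lemma card_tree_level: "finite (tree_level l (Suc k)) \<and> card (tree_level l (Suc k)) = l * (l - 1) ^ k"
proof (induction k)
  case 0
  have "inj_on (\<lambda>i::nat. [i]) {..<l}"
    by (simp add: inj_on_def)
  then show ?case by (simp add: tree_level_1 card_image)
next
  case (Suc k)
  have "inj_on (\<lambda>(i, w). i # w) ({..<l - 1} \<times> tree_level l (Suc k))"
    by (auto simp: inj_on_def)
  with Suc show ?case
    by (simp add: tree_level_Suc card_image card_cartesian_product)
qed

lemma prod_shifted_rising:
  fixes c :: real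
  shows "(c + 1) * (\<Prod>j\<in>{2..k+2}. c + real j) = (\<Prod>j<k. c + 1 + real j) * (c + real k + 1) * (c + real k + 2)"
proof (induction k)
  case (Suc k)
  define A where "A = (\<Prod>j\<in>{2..k+2}. c + real j)"
  define B where "B = (\<Prod>j<k. c + 1 + real j)"
  have A: "(\<Prod>j\<in>{2..Suc k+2}. c + real j) = A * (c + real k + 3)"
    unfolding A_def by (simp add: prod.cl_ivl_Suc add.commute add.left_commute)
  have B: "(\<Prod>j<Suc k. c + 1 + real j) = B * (c + 1 + real k)"
    unfolding B_def by simp
  have IH: "(c + 1) * A = B * (c + real k + 1) * (c + real k + 2)"
    unfolding A_def B_def by (rule Suc.IH)
  have "(c + 1) * (A * (c + real k + 3)) = ((c + 1) * A) * (c + real k + 3)"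
    by (simp only: mult.assoc)
  also have "\<dots> = B * (c + 1 + real k) * (c + real (Suc k) + 1) * (c + real (Suc k) + 2)"
    unfolding IH by (simp add: algebra_simps)
  finally show ?case
    unfolding A B .
qed simp

lemma bully_probability_closed_form:
  fixes l k :: nat
  assumes "l \<ge> 2"
  defines "c \<equiv> 1 / (real l - 1)"
  shows "real (l * (l - 1) ^ k) / (real (l + Suc k * (l - 1)) * (\<Prod>j<k. real (l + j * (l - 1))))
       = (c + real k + 1) / (\<Prod>j\<in>{2..k+2}. c + real j)"
proof -
  define n where "n = real l - 1"
  have n: "n > 0" "real (l - 1) = n"
    using assms(1) by (auto simp: n_def of_nat_diff)
  have c: "c > 0" "n * c = 1"
    using n unfolding c_def n_def by auto
  have l: "real l = n * (c + 1)"
    using c n unfolding n_def by (simp add: algebra_simps)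
  have pool_size: "real (l + j * (l - 1)) = n * (c + 1 + real j)" for j
  proof -
    have "real (l + j * (l - 1)) = real l + real j * real (l - 1)"
      by (simp only: of_nat_add of_nat_mult)
    then show ?thesis
      unfolding l n(2) by (simp add: algebra_simps)
  qed
  define P where "P = (\<Prod>j<k. c + 1 + real j)"
  define Q where "Q = (\<Prod>j\<in>{2..k+2}. c + real j)"
  have P: "P > 0" and Q: "Q > 0"
    unfolding P_def Q_def using c(1) by (intro prod_pos; simp add: add_pos_nonneg)+
  have PQ: "(c + 1) * Q = P * (c + real k + 1) * (c + real k + 2)"
    unfolding P_def Q_def by (rule prod_shifted_rising)
  have "(\<Prod>j<k. real (l + j * (l - 1))) = n ^ k * P"
    unfolding pool_size P_def by (simp add: prod.distrib)
  moreover have "real (l + Suc k * (l - 1)) = n * (c + real k + 2)"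
    using pool_size[of "Suc k"] by simp
  moreover have "real (l * (l - 1) ^ k) = n * (c + 1) * n ^ k"
    using l n by simp
  ultimately have "real (l * (l - 1) ^ k) / (real (l + Suc k * (l - 1)) * (\<Prod>j<k. real (l + j * (l - 1))))
      = n * (c + 1) * n ^ k / (n * (c + real k + 2) * (n ^ k * P))"
    by (simp only:)
  also have "\<dots> = (c + 1) / ((c + real k + 2) * P)"
    using n(1) c(1) P by (simp add: frac_eq_eq add_pos_nonneg)
  also have "\<dots> = (c + real k + 1) / Q"
  proof -
    have d: "(c + real k + 2) * P \<noteq> 0" "Q \<noteq> 0"
      using c(1) P Q by (auto simp: add_pos_nonneg)
    show ?thesis
      by (simp only: frac_eq_eq[OF d]) (use PQ in \<open>simp add: algebra_simps\<close>)
  qed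
  finally show ?thesis
    unfolding Q_def .
qed

lemma prob_space_edge_weights: "prob_space edge_weights"
  unfolding edge_weights_def by (rule prob_space_PiM) (rule prob_space_uniform01)

theorem mainTheorem8:
  fixes l k :: nat
  assumes "l \<ge> 2"
  defines "c \<equiv> 1 / (real l - 1)"
  shows "measure edge_weights {U \<in> space edge_weights. has_bully l U \<and> Mtilde l U = k}
         = (c + real k + 1) / (\<Prod>j\<in>{2..k+2}. c + real j)"
proof -
  interpret prob_space edge_weights
    by (rule prob_space_edge_weights)
  let ?A = "\<lambda>v. {U \<in> space edge_weights. has_bully l U \<and> Mtilde l U = k \<and> zpath l U (Suc k) = v}"
  let ?V = "tree_level l (Suc k)"
  let ?p = "1 / (real (l + Suc k * (l - 1)) * (\<Prod>j<k. real (l + j * (l - 1))))"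
  have "{U \<in> space edge_weights. has_bully l U \<and> Mtilde l U = k} = (\<Union>v\<in>?V. ?A v)"
    using tree_vertex_bully[OF assms(1)] unfolding tree_level_def by auto
  then have "measure edge_weights {U \<in> space edge_weights. has_bully l U \<and> Mtilde l U = k}
      = (\<Sum>v\<in>?V. measure edge_weights (?A v))"
    using card_tree_level sets_bully_event
    by (auto intro!: finite_measure_finite_Union simp: disjoint_family_on_def)
  also have "\<dots> = (\<Sum>v\<in>?V. ?p)"
  proof (rule sum.cong[OF refl])
    fix v assume "v \<in> ?V"
    then obtain i w where "v = i # w" "tree_vertex l v" "length w = k"
      unfolding tree_level_def by (cases v) auto
    then show "measure edge_weights (?A v) = ?p"
      using measure_bully_event[OF assms(1)] chain_denom_bully_chain by simp
  qed
  also have "\<dots> = (c + real k + 1) / (\<Prod>j\<in>{2..k+2}. c + real j)"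
    using card_tree_level bully_probability_closed_form[OF assms(1)] unfolding c_def by simp
  finally show ?thesis .
qed

end
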